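(* Let $a,b$ be real numbers with $0<a<1$, $0\le b<1$, and suppose $2^{e_0}a$ and $2^{e_0}b$ are integers for some $e_0$. Put $k_{\mathrm r}=-\frac{1}{1-a}$ and $c=\frac{1}{2-a}$ (the unique fixed point of the continuous generalized Tent map). Then there is $E$ such that for every integer $e\ge \max(E,e_0)$ the following holds, where $T_e$ is the generalized Tent map defined below and $x'=\max\{x\in\{0,\dots,2^e\} : x\ge 2^e a,\ T_e(x)\ge 2^e a\}$: for every integer $x$ with $2^e a\le x\le 2^e c+\frac{k_{\mathrm r}}{k_{\mathrm r}^2-1}$ one has $T_e^2(x)<x$, and for every integer $x$ with $2^e c+\frac{1}{k_{\mathrm r}^2-1}<x\le x'$ one has $T_e^2(x)>x$. (Here $T_e^2=T_e\circ T_e$.)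
   Context: The generalized Tent map in the fixed-point domain of precision $e$ (with floor quantization) is the map $T_e:\{0,1,\dots,2^e\}\to\mathbb{Z}$ given by $$T_e(x)=\begin{cases}\left\lfloor 2^e b+\frac{1-b}{a}\,x\right\rfloor & \text{if } 0\le x<2^e a,\\[2pt] \left\lfloor \frac{2^e-x}{1-a}\right\rfloor & \text{if } 2^e a\le x\le 2^e,\end{cases}$$ where $a,b$ are parameters with $2^e a,2^e b\in\{0,1,\dots,2^e\}$. *)

theory Defs
  imports Complex_Main
begin

text \<open>Generalized Tent map in fixed-point precision e with floor quantization.
  Defined on all integers; the relevant domain is {0..2^e}.\<close>
definition tent_fp :: "nat \<Rightarrow> real \<Rightarrow> real \<Rightarrow> int \<Rightarrow> int" where
  "tent_fp e a b x =
     (if real_of_int x < 2^e * a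
      then \<lfloor>2^e * b + (1 - b) / a * real_of_int x\<rfloor>
      else \<lfloor>(2^e - real_of_int x) / (1 - a)\<rfloor>)"

end

theory Submission
  imports Defs
begin

text \<open>From the turning point 2^e a on, the map is the floored affine map
  x \<mapsto> \<lfloor>(2^e - x) / (1 - a)\<rfloor> of slope kr, so its square is expanding with
  slope kr^2 > 1 about the scaled fixed point 2^e c and pushes integers away from it.
  The two floor errors move T(T x) by at most one slope-weighted unit, which the offsets
  kr/(kr^2 - 1) and 1/(kr^2 - 1) absorb. Below 2^e c, integrality of 2^e a keeps T x on
  the right branch; above it, T x \<ge> T x' does so up to x'. Integrality of 2^e a also puts
  2^e a into the set defining x', so E = 0 works. The left branch, and with it the
  parameter b, is never visited.\<close>

lemma tent_fp_right:
  assumes "2^e * a \<le> real_of_int x"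
  shows "tent_fp e a b x = \<lfloor>(2^e - real_of_int x) / (1 - a)\<rfloor>"
  using assms by (simp add: tent_fp_def)

lemma tent_fp_turning_point:
  assumes "a < 1" "real_of_int A = 2^e * a"
  shows "tent_fp e a b A = 2^e"
proof -
  have "(2^e - 2^e * a) / (1 - a) = (2^e :: real)"
    using assms(1) by (simp add: field_simps)
  then show ?thesis using assms by (simp add: tent_fp_right)
qed

lemma power2_mult_Ints_mono:
  fixes a :: real
  assumes "2^e0 * a \<in> \<int>" "e0 \<le> e"
  shows "2^e * a \<in> \<int>"
proof -
  have "2^e * a = 2^(e - e0) * (2^e0 * a)"
    using assms(2) by (simp add: mult.assoc flip: power_add)
  then show ?thesis using assms(1) by (metis Ints_mult Ints_numeral Ints_power)
qed

lemma turning_point_le_fixed_point: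
  fixes N a :: real
  assumes "0 \<le> N" "a < 1"
  shows "N * a \<le> N / (2 - a)"
proof -
  have "a * (2 - a) \<le> 1" using zero_le_power2[of "1 - a"]
    by (simp add: power2_eq_square algebra_simps)
  then have "N * a * (2 - a) \<le> N" using assms(1) mult_left_le by (simp add: mult.assoc)
  then show ?thesis using assms(2) by (simp add: le_divide_eq)
qed

lemma tent_slope_square_minus_one:
  fixes a :: real
  assumes "a < 1"
  shows "(- 1 / (1 - a))^2 - 1 = a * (2 - a) / (1 - a)^2"
proof -
  have "(1 - a)^2 \<noteq> 0" using assms by simp
  then have "(- 1 / (1 - a))^2 - 1 = (1 - (1 - a)^2) / (1 - a)^2"
    by (simp add: power_divide diff_divide_distrib)
  also have "1 - (1 - a)^2 = a * (2 - a)" by (simp add: power2_eq_square algebra_simps)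
  finally show ?thesis .
qed

lemma tent_slope_offsets:
  fixes a :: real
  assumes "0 < a" "a < 1"
  shows "(- 1 / (1 - a)) / ((- 1 / (1 - a))^2 - 1) = (a - 1) / (a * (2 - a))"
    and "1 / ((- 1 / (1 - a))^2 - 1) = (1 - a)^2 / (a * (2 - a))"
proof -
  have "1 - a \<noteq> 0" "a * (2 - a) \<noteq> 0" using assms by auto
  then show "(- 1 / (1 - a)) / ((- 1 / (1 - a))^2 - 1) = (a - 1) / (a * (2 - a))"
    and "1 / ((- 1 / (1 - a))^2 - 1) = (1 - a)^2 / (a * (2 - a))"
    unfolding tent_slope_square_minus_one[OF assms(2)] by (simp_all add: power2_eq_square)
qed

lemma right_branch_twice_lt:
  fixes N a x :: real
  assumes "0 < a" "a < 1" "x \<le> N / (2 - a) + (a - 1) / (a * (2 - a))"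
  shows "(N - \<lfloor>(N - x) / (1 - a)\<rfloor>) / (1 - a) < x"
proof -
  define y where "y = real_of_int \<lfloor>(N - x) / (1 - a)\<rfloor>"
  have m: "0 < 1 - a" and d: "0 < a * (2 - a)" using assms(1,2) by auto
  have "N / (2 - a) + (a - 1) / (a * (2 - a)) = N * a / (a * (2 - a)) + (a - 1) / (a * (2 - a))"
    using assms(1) by simp
  also have "\<dots> = (N * a + (a - 1)) / (a * (2 - a))"
    by (rule add_divide_distrib[symmetric])
  finally have x_le: "x * (a * (2 - a)) \<le> N * a + (a - 1)"
    using assms(3) d by (simp add: pos_le_divide_eq)
  have "(N - x) / (1 - a) - 1 < y" unfolding y_def by linarith
  then have y_gt: "N - x - (1 - a) < y * (1 - a)" using m by (simp add: field_simps)
  have "(N - y) * (1 - a) < x - N * a + (1 - a)"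
    using y_gt by (simp add: algebra_simps)
  also have "\<dots> \<le> x * (1 - a) * (1 - a)"
    using x_le by (simp add: algebra_simps)
  finally have "N - y < x * (1 - a)" using m by (simp add: mult_less_cancel_right)
  then show ?thesis using m unfolding y_def by (simp add: divide_less_eq)
qed

lemma right_branch_twice_gt:
  fixes N a x :: real
  assumes "0 < a" "a < 1" "N / (2 - a) + (1 - a)^2 / (a * (2 - a)) < x"
  shows "x + 1 < (N - \<lfloor>(N - x) / (1 - a)\<rfloor>) / (1 - a)"
proof -
  define y where "y = real_of_int \<lfloor>(N - x) / (1 - a)\<rfloor>"
  have m: "0 < 1 - a" and d: "0 < a * (2 - a)" using assms(1,2) by auto
  have "N / (2 - a) + (1 - a)^2 / (a * (2 - a)) = N * a / (a * (2 - a)) + (1 - a)^2 / (a * (2 - a))"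
    using assms(1) by simp
  also have "\<dots> = (N * a + (1 - a)^2) / (a * (2 - a))"
    by (rule add_divide_distrib[symmetric])
  finally have x_gt: "N * a + (1 - a)^2 < x * (a * (2 - a))"
    using assms(3) d by (simp add: pos_divide_less_eq)
  have "y \<le> (N - x) / (1 - a)" unfolding y_def by linarith
  then have y_le: "y * (1 - a) \<le> N - x" using m by (simp add: le_divide_eq)
  have "(x + 1) * (1 - a) * (1 - a) < x - N * a"
    using x_gt by (simp add: algebra_simps power2_eq_square)
  also have "\<dots> \<le> (N - y) * (1 - a)"
    using y_le by (simp add: algebra_simps)
  finally have "(x + 1) * (1 - a) < N - y" using m by (simp add: mult_less_cancel_right)
  then show ?thesis using m unfolding y_def by (simp add: less_divide_eq)
qed

lemma tent_fp_twice_lt: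
  assumes "0 < a" "a < 1" "2^e * a \<in> \<int>"
    and "2^e * a \<le> real_of_int x" "real_of_int x \<le> 2^e / (2 - a) + (a - 1) / (a * (2 - a))"
  shows "tent_fp e a b (tent_fp e a b x) < x"
proof -
  define z where "z = (2^e - real_of_int x) / (1 - a)"
  have m: "0 < 1 - a" using assms(2) by simp
  have "(a - 1) / (a * (2 - a)) \<le> 0" using assms(1,2) by (simp add: divide_nonpos_pos)
  then have "real_of_int x \<le> 2^e / (2 - a)" using assms(5) by linarith
  then have "real_of_int x * (2 - a) \<le> 2^e" using assms(2) by (simp add: le_divide_eq)
  then have "2^e / (2 - a) \<le> z"
    using assms(2) m unfolding z_def by (simp add: field_simps)
  then have "2^e * a \<le> z"
    using turning_point_le_fixed_point[of "2^e" a] assms(2) by simp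
  then have "2^e * a \<le> real_of_int \<lfloor>z\<rfloor>"
    using assms(3) by (metis Ints_cases floor_mono floor_of_int of_int_le_iff)
  then have "tent_fp e a b (tent_fp e a b x) = \<lfloor>(2^e - real_of_int \<lfloor>z\<rfloor>) / (1 - a)\<rfloor>"
    using assms(4) unfolding z_def by (simp add: tent_fp_right)
  moreover have "(2^e - real_of_int \<lfloor>z\<rfloor>) / (1 - a) < x"
    using right_branch_twice_lt[OF assms(1,2,5)] unfolding z_def .
  ultimately show ?thesis by (simp add: floor_less_iff)
qed

lemma tent_fp_twice_gt:
  assumes "0 < a" "a < 1" "2^e / (2 - a) + (1 - a)^2 / (a * (2 - a)) < real_of_int x"
    and "x \<le> x'" "2^e * a \<le> real_of_int x'" "2^e * a \<le> real_of_int (tent_fp e a b x')"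
  shows "x < tent_fp e a b (tent_fp e a b x)"
proof -
  define z where "z = (2^e - real_of_int x) / (1 - a)"
  have m: "0 < 1 - a" using assms(2) by simp
  have "0 \<le> (1 - a)^2 / (a * (2 - a))" using assms(1,2) by simp
  then have "2^e * a \<le> real_of_int x"
    using turning_point_le_fixed_point[of "2^e" a] assms(2,3) by simp
  then have Tx: "tent_fp e a b x = \<lfloor>z\<rfloor>" unfolding z_def by (simp add: tent_fp_right)
  have "(2^e - real_of_int x') / (1 - a) \<le> z"
    using assms(4) m unfolding z_def by (simp add: divide_right_mono)
  then have "tent_fp e a b x' \<le> \<lfloor>z\<rfloor>" using assms(5) by (simp add: tent_fp_right floor_mono)
  then have "2^e * a \<le> real_of_int \<lfloor>z\<rfloor>" using assms(6) by linarith
  then have "tent_fp e a b (tent_fp e a b x) = \<lfloor>(2^e - real_of_int \<lfloor>z\<rfloor>) / (1 - a)\<rfloor>"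
    using Tx by (simp add: tent_fp_right)
  moreover have "real_of_int x + 1 < (2^e - real_of_int \<lfloor>z\<rfloor>) / (1 - a)"
    using right_branch_twice_gt[OF assms(1,2,3)] unfolding z_def .
  ultimately show ?thesis by (simp add: less_floor_iff)
qed

lemma Max_tent_fp_right_return_mem:
  fixes a b :: real
  assumes "0 \<le> a" "a < 1" "2^e * a \<in> \<int>"
  defines "S \<equiv> {x \<in> {0..2^e}. 2^e * a \<le> real_of_int x \<and> 2^e * a \<le> real_of_int (tent_fp e a b x)}"
  shows "Max S \<in> S"
proof (rule Max_in)
  show "finite S" unfolding S_def by (rule finite_subset[of _ "{0..2^e}"]) auto
  obtain A where A: "real_of_int A = 2^e * a" using assms(3) by (metis Ints_cases)
  have "0 \<le> real_of_int A" "real_of_int A \<le> real_of_int (2^e)"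
    using A assms(1,2) by (simp_all add: mult_left_le)
  then have "0 \<le> A" "A \<le> 2^e" by (simp_all only: of_int_le_iff of_int_0_le_iff)
  then have "A \<in> S"
    using A tent_fp_turning_point[OF assms(2) A, of b] assms(1,2) unfolding S_def by simp
  then show "S \<noteq> {}" by blast
qed

theorem mainTheorem2:
  fixes a b :: real and e0 :: nat
  assumes "0 < a" "a < 1" "0 \<le> b" "b < 1"
    and "2 ^ e0 * a \<in> \<int>" "2 ^ e0 * b \<in> \<int>"
  shows "\<exists>E::nat. \<forall>e::nat. e \<ge> max E e0 \<longrightarrow>
    (let kr = - 1 / (1 - a); c = 1 / (2 - a);
         T = tent_fp e a b;
         x' = Max {x \<in> {0..2^e}. real_of_int x \<ge> 2^e * a \<and> real_of_int (T x) \<ge> 2^e * a}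
     in (\<forall>x::int. 2^e * a \<le> real_of_int x \<and> real_of_int x \<le> 2^e * c + kr / (kr^2 - 1)
            \<longrightarrow> T (T x) < x)
      \<and> (\<forall>x::int. 2^e * c + 1 / (kr^2 - 1) < real_of_int x \<and> x \<le> x'
            \<longrightarrow> T (T x) > x))"
proof -
  have "2^e * a \<in> \<int>" if "e0 \<le> e" for e :: nat
    using power2_mult_Ints_mono[OF assms(5) that] .
  then show ?thesis
    using Max_tent_fp_right_return_mem[of a _ b] assms(1,2)
      tent_fp_twice_lt[OF assms(1,2)] tent_fp_twice_gt[OF assms(1,2)]
    unfolding Let_def tent_slope_offsets[OF assms(1,2)] by (intro exI[of _ 0]) auto
qed

end
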